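(* Let $R$ be the ring of integers of a nonarchimedean local field of characteristic not $2$ in which $2$ is a prime element, and let $L\cong\langle 1,-1\rangle$ be a binary $R$-lattice. Then $Q(L) = R^\times\cup 4R$, and \[ Q^\ast(L) = \begin{cases} R^\times\cup 4R & \text{if } R\ne\mathbb{Z}_2,\\ R^\times\cup 8R & \text{if } R=\mathbb{Z}_2.\end{cases} \]
   Context: $\langle 1,-1\rangle$ is the $R$-lattice with Gram matrix $\operatorname{diag}(1,-1)$, with quadratic form $Q(v)=B(v,v)$. $Q(L)=\{Q(v):v\in L\}$ and $Q^\ast(L)=\{Q(v): v\in L \text{ primitive}\}$, where $v$ is primitive if $Rv$ is a direct summand of $L$. *)

theory Defs
  imports Main "HOL-Computational_Algebra.Factorial_Ring"
begin

text \<open>The ring of integers R of a nonarchimedean local field is a complete discrete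
valuation ring with finite residue field (and R determines the field as its fraction field).\<close>

definition dvr_uniformizer :: "'a::idom \<Rightarrow> bool" where
  "dvr_uniformizer p \<longleftrightarrow> p \<noteq> 0 \<and> \<not> p dvd 1 \<and>
     (\<forall>x. x \<noteq> 0 \<longrightarrow> (\<exists>u n. u dvd 1 \<and> x = u * p ^ n))"

definition finite_residue_field :: "'a::idom \<Rightarrow> bool" where
  "finite_residue_field p \<longleftrightarrow> (\<exists>S. finite S \<and> (\<forall>x. \<exists>s\<in>S. p dvd (x - s)))"

definition adically_complete :: "'a::idom \<Rightarrow> bool" where
  "adically_complete p \<longleftrightarrow>
     (\<forall>s :: nat \<Rightarrow> 'a.
        (\<forall>k. \<exists>N. \<forall>m\<ge>N. \<forall>n\<ge>N. p ^ k dvd (s m - s n)) \<longrightarrow>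
        (\<exists>l. \<forall>k. \<exists>N. \<forall>n\<ge>N. p ^ k dvd (s n - l)))"

definition nonarch_local_integer_ring :: "'a::idom itself \<Rightarrow> bool" where
  "nonarch_local_integer_ring _ \<longleftrightarrow>
     (\<exists>p::'a. dvr_uniformizer p \<and> finite_residue_field p \<and> adically_complete p)"

text \<open>Z_2 as the inverse limit of Z/2^n Z: compatible sequences of residues.\<close>

definition z2_carrier :: "(nat \<Rightarrow> int) set" where
  "z2_carrier = {f. (\<forall>n. 0 \<le> f n \<and> f n < 2 ^ n) \<and> (\<forall>n. f (Suc n) mod 2 ^ n = f n)}"

definition z2_add :: "(nat \<Rightarrow> int) \<Rightarrow> (nat \<Rightarrow> int) \<Rightarrow> (nat \<Rightarrow> int)" where
  "z2_add f g = (\<lambda>n. (f n + g n) mod 2 ^ n)"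

definition z2_mult :: "(nat \<Rightarrow> int) \<Rightarrow> (nat \<Rightarrow> int) \<Rightarrow> (nat \<Rightarrow> int)" where
  "z2_mult f g = (\<lambda>n. (f n * g n) mod 2 ^ n)"

definition z2_one :: "nat \<Rightarrow> int" where
  "z2_one = (\<lambda>n. 1 mod 2 ^ n)"

definition iso_to_Z2 :: "'a::comm_ring_1 itself \<Rightarrow> bool" where
  "iso_to_Z2 _ \<longleftrightarrow> (\<exists>\<phi> :: 'a \<Rightarrow> (nat \<Rightarrow> int).
      bij_betw \<phi> UNIV z2_carrier \<and>
      (\<forall>a b. \<phi> (a + b) = z2_add (\<phi> a) (\<phi> b)) \<and>
      (\<forall>a b. \<phi> (a * b) = z2_mult (\<phi> a) (\<phi> b)) \<and>
      \<phi> 1 = z2_one)"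

text \<open>L = R^2 (pairs), Gram matrix diag(1,-1), so Q(x,y) = B(v,v) = x^2 - y^2.\<close>

definition Qform :: "'a::comm_ring_1 \<times> 'a \<Rightarrow> 'a" where
  "Qform v = fst v * fst v - snd v * snd v"

definition smul_pair :: "'a::comm_ring_1 \<Rightarrow> 'a \<times> 'a \<Rightarrow> 'a \<times> 'a" where
  "smul_pair r v = (r * fst v, r * snd v)"

definition add_pair :: "'a::comm_ring_1 \<times> 'a \<Rightarrow> 'a \<times> 'a \<Rightarrow> 'a \<times> 'a" where
  "add_pair v w = (fst v + fst w, snd v + snd w)"

definition is_submodule :: "('a::comm_ring_1 \<times> 'a) set \<Rightarrow> bool" where
  "is_submodule W \<longleftrightarrow> (0, 0) \<in> W \<and> (\<forall>a\<in>W. \<forall>b\<in>W. add_pair a b \<in> W) \<and>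
     (\<forall>r. \<forall>a\<in>W. smul_pair r a \<in> W)"

definition primitive :: "'a::comm_ring_1 \<times> 'a \<Rightarrow> bool" where
  "primitive v \<longleftrightarrow> (\<exists>W. is_submodule W \<and>
     (\<forall>z. \<exists>r. \<exists>w\<in>W. z = add_pair (smul_pair r v) w) \<and>
     (\<forall>r. smul_pair r v \<in> W \<longrightarrow> smul_pair r v = (0, 0)))"

definition Q_values :: "('a::comm_ring_1) set" where
  "Q_values = {Qform v | v. True}"

definition Q_prim_values :: "('a::comm_ring_1) set" where
  "Q_prim_values = {Qform v | v. primitive v}"

end

theory Submission
  imports Defs
begin

text \<open>Since 2 is prime it is a uniformizer of R, so the non-units are exactly the even
  elements and, squaring being injective on the finite residue field of characteristic 2,
  every element is a square modulo 2. In x^2 - y^2 = (x - y)(x + y) the two factors differ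
  by 2y, so a value is a unit (both factors odd) or a multiple of 4; conversely
  4r = (r + 1)^2 - (r - 1)^2, and a unit u = c^2 + 2t is (c + t/c)^2 - (t/c)^2.
  A vector is primitive iff it is zero or unimodular, i.e. iff its coordinates are not both
  even. For a primitive vector with x - y = 2a the value 4a(a + y) is a multiple of 8 unless
  a and a + y are both odd, which over the residue field F_2 would make x and y even; over a
  larger residue field any residue c other than 0 and 1 yields the primitive vector
  (c + r/c, r/c - c) of value 4r. Finally, by completeness R is Z_2 exactly when its residue
  field is F_2, the isomorphism sending a to its residues modulo the powers of 2.\<close>

lemma dvr_uniformizer_dvd_nonunit:
  assumes "dvr_uniformizer p" and "\<not> x dvd 1"
  shows "p dvd x"
proof (cases "x = 0")
  case False
  then obtain v n where v: "v dvd 1" "x = v * p ^ n"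
    using assms(1) unfolding dvr_uniformizer_def by blast
  with assms(2) have "n \<noteq> 0" by (metis mult.right_neutral power_0)
  then show ?thesis using v(2) by simp
qed simp

lemma dvr_uniformizer_associated_prime:
  fixes p q :: "'a::idom"
  assumes p: "dvr_uniformizer p" and q: "prime_elem q"
  shows "p dvd q" "q dvd p"
proof -
  show "p dvd q" using p q by (simp add: dvr_uniformizer_dvd_nonunit prime_elem_not_unit)
  obtain v n where v: "v dvd 1" "q = v * p ^ n"
    using p q unfolding dvr_uniformizer_def prime_elem_def by blast
  have "\<not> q dvd v" using v(1) q by (meson dvd_trans prime_elem_not_unit)
  then have "q dvd p ^ n" using q v(2) prime_elem_dvd_mult_iff by (metis dvd_refl)
  then show "q dvd p" using q prime_elem_dvd_power by blast
qed

lemma dvr_uniformizer_pow_dvd_imp_zero: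
  assumes p: "dvr_uniformizer p" and dvd: "\<forall>n. p ^ n dvd x"
  shows "x = 0"
proof (rule ccontr)
  assume "x \<noteq> 0"
  then obtain v m where v: "v dvd 1" "x = v * p ^ m"
    using p unfolding dvr_uniformizer_def by blast
  have p0: "p \<noteq> 0" "\<not> p dvd 1" using p unfolding dvr_uniformizer_def by auto
  have "p ^ m * p dvd p ^ m * v" using dvd v(2) by (metis mult.commute power_Suc2)
  then have "p dvd v" using p0 by simp
  then show False using v(1) p0 dvd_trans by blast
qed

lemma finite_residue_field_dvd:
  "finite_residue_field p \<Longrightarrow> q dvd p \<Longrightarrow> finite_residue_field q"
  unfolding finite_residue_field_def by (meson dvd_trans)

lemma adically_complete_associated:
  assumes "adically_complete p" and "p dvd q" and "q dvd p"
  shows "adically_complete q"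
  unfolding adically_complete_def
proof (intro allI impI)
  fix s :: "nat \<Rightarrow> 'a"
  assume "\<forall>k. \<exists>N. \<forall>m\<ge>N. \<forall>n\<ge>N. q ^ k dvd s m - s n"
  then have "\<forall>k. \<exists>N. \<forall>m\<ge>N. \<forall>n\<ge>N. p ^ k dvd s m - s n"
    using dvd_power_same[OF assms(2)] dvd_trans by meson
  then obtain l where "\<forall>k. \<exists>N. \<forall>n\<ge>N. p ^ k dvd s n - l"
    using assms(1) unfolding adically_complete_def by blast
  then show "\<exists>l. \<forall>k. \<exists>N. \<forall>n\<ge>N. q ^ k dvd s n - l"
    using dvd_power_same[OF assms(3)] dvd_trans by meson
qed

lemma dvd_diff_if_dvd_square_diff:
  fixes q x y :: "'a::idom"
  assumes q: "prime_elem q" "q dvd 2" and "q dvd x * x - y * y"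
  shows "q dvd x - y"
proof -
  have "(x - y) * (x - y) = (x * x - y * y) - 2 * (y * (x - y))"
    by (simp add: algebra_simps)
  then have "q dvd (x - y) * (x - y)" using assms(3) q(2) by (metis dvd_diff dvd_mult2)
  then show ?thesis using q(1) prime_elem_dvd_mult_iff by blast
qed

text \<open>Squaring induces an injective, hence surjective, self-map of the finite set of
  residue classes modulo q.\<close>

lemma square_mod_prime_dvd_two:
  fixes q u :: "'a::idom"
  assumes fin: "finite_residue_field q" and q: "prime_elem q" "q dvd 2"
  shows "\<exists>c. q dvd u - c * c"
proof -
  define cls where "cls x = {y. q dvd y - x}" for x
  have cls_eq: "cls x = cls y \<longleftrightarrow> q dvd x - y" for x y
  proof
    assume "cls x = cls y"
    moreover have "x \<in> cls x" by (simp add: cls_def)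
    ultimately show "q dvd x - y" by (simp add: cls_def)
  next
    assume "q dvd x - y"
    then show "cls x = cls y" unfolding cls_def
      by (metis (no_types, opaque_lifting) diff_add_cancel diff_diff_eq2 dvd_add dvd_diff)
  qed
  obtain S where S: "finite S" "\<forall>x. \<exists>s\<in>S. q dvd x - s"
    using fin unfolding finite_residue_field_def by blast
  have "range cls \<subseteq> cls ` S"
  proof
    fix C assume "C \<in> range cls"
    then obtain x where x: "C = cls x" by blast
    obtain s where "s \<in> S" "q dvd x - s" using S(2) by blast
    then show "C \<in> cls ` S" unfolding x cls_eq[symmetric] by blast
  qed
  then have fin_cls: "finite (range cls)" using S(1) by (meson finite_imageI finite_subset)
  define sq where "sq C = {y. \<exists>x\<in>C. q dvd y - x * x}" for C
  have sq_cls: "sq (cls x) = cls (x * x)" for x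
  proof (intro set_eqI iffI)
    fix y assume "y \<in> sq (cls x)"
    then obtain z where z: "q dvd z - x" "q dvd y - z * z" by (auto simp: sq_def cls_def)
    then have "q dvd z * z - x * x" by (metis dvd_mult2 square_diff_square_factored mult.commute)
    then show "y \<in> cls (x * x)" using z(2) unfolding cls_def
      by (metis diff_add_cancel diff_diff_eq2 dvd_add mem_Collect_eq)
  next
    fix y assume "y \<in> cls (x * x)"
    then show "y \<in> sq (cls x)" by (force simp: sq_def cls_def)
  qed
  have "inj_on sq (range cls)"
  proof (rule inj_onI)
    fix C D assume "C \<in> range cls" "D \<in> range cls" and sq_eq: "sq C = sq D"
    then obtain x y where xy: "C = cls x" "D = cls y" by blast
    with sq_eq have "cls (x * x) = cls (y * y)" by (simp add: sq_cls)
    then have "q dvd x * x - y * y" by (simp add: cls_eq)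
    with q have "q dvd x - y" by (rule dvd_diff_if_dvd_square_diff)
    then show "C = D" by (simp add: xy cls_eq)
  qed
  moreover have "sq ` range cls \<subseteq> range cls"
  proof (rule image_subsetI)
    fix C assume "C \<in> range cls"
    then obtain x where "C = cls x" by blast
    then show "sq C \<in> range cls" by (simp add: sq_cls)
  qed
  ultimately have "sq ` range cls = range cls" by (intro endo_inj_surj[OF fin_cls])
  then have "cls u \<in> sq ` range cls" by simp
  then obtain x where "cls u = sq (cls x)" by blast
  then have "q dvd u - x * x" by (simp add: sq_cls cls_eq)
  then show ?thesis by blast
qed

lemma z2_carrier_mod:
  assumes "f \<in> z2_carrier" and "k \<le> m"
  shows "f m mod 2 ^ k = f k"
  using assms(2)
proof (induction m rule: dec_induct)
  case base
  then show ?case using assms(1) by (simp add: z2_carrier_def)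
next
  case (step m)
  have "(2::int) ^ k dvd 2 ^ m" using step by (simp add: le_imp_power_dvd)
  then have "f (Suc m) mod 2 ^ k = f (Suc m) mod 2 ^ m mod 2 ^ k" by (simp add: mod_mod_cancel)
  also have "\<dots> = f m mod 2 ^ k" using assms(1) by (simp add: z2_carrier_def)
  finally show ?case using step by simp
qed

lemma z2_carrier_halve:
  assumes f: "f \<in> z2_carrier" and "f 1 = 0"
  defines "g \<equiv> \<lambda>n. f (Suc n) div 2"
  shows "g \<in> z2_carrier" and "z2_mult (z2_add z2_one z2_one) g = f"
proof -
  have bound: "0 \<le> f n \<and> f n < 2 ^ n" for n using f by (simp add: z2_carrier_def)
  have f_twice: "f (Suc n) = 2 * g n" for n
  proof -
    have "f (Suc n) mod 2 = 0" using z2_carrier_mod[OF f, of 1 "Suc n"] assms(2) by simp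
    then show ?thesis unfolding g_def by presburger
  qed
  have "g (Suc n) mod 2 ^ n = g n" for n
  proof -
    have "f (Suc (Suc n)) mod 2 ^ Suc n = f (Suc n)" using f unfolding z2_carrier_def by blast
    then have "2 * g (Suc n) mod (2 * 2 ^ n) = 2 * g n" by (simp only: f_twice power_Suc)
    then have "2 * (g (Suc n) mod 2 ^ n) = 2 * g n" by (simp only: mult_mod_right)
    then show ?thesis by simp
  qed
  moreover have "0 \<le> g n \<and> g n < 2 ^ n" for n using bound[of "Suc n"] f_twice[of n] by simp
  ultimately show "g \<in> z2_carrier" by (simp add: z2_carrier_def)
  show "z2_mult (z2_add z2_one z2_one) g = f"
  proof
    fix n
    have "z2_mult (z2_add z2_one z2_one) g n = f (Suc n) mod 2 ^ n"
      by (simp add: z2_mult_def z2_add_def z2_one_def f_twice mod_simps)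
    also have "\<dots> = f n" using f by (simp add: z2_carrier_def)
    finally show "z2_mult (z2_add z2_one z2_one) g n = f n" .
  qed
qed

text \<open>The condition \<forall>a. 2 dvd a \<or> 2 dvd a - 1 used below says that the residue field
  R/2R is F_2.\<close>

lemma iso_to_Z2_imp_residues_01:
  assumes "iso_to_Z2 TYPE('a::comm_ring_1)"
  shows "\<forall>a::'a. 2 dvd a \<or> 2 dvd a - 1"
proof -
  obtain \<phi> :: "'a \<Rightarrow> nat \<Rightarrow> int" where bij: "bij_betw \<phi> UNIV z2_carrier"
    and add: "\<And>a b. \<phi> (a + b) = z2_add (\<phi> a) (\<phi> b)"
    and mult: "\<And>a b. \<phi> (a * b) = z2_mult (\<phi> a) (\<phi> b)"
    and one: "\<phi> 1 = z2_one"
    using assms unfolding iso_to_Z2_def by blast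
  have inj: "inj \<phi>" and range: "range \<phi> = z2_carrier" using bij by (auto simp: bij_betw_def)
  have two_dvd: "2 dvd c" if "\<phi> c 1 = 0" for c :: 'a
  proof -
    have "\<phi> c \<in> z2_carrier" using range by blast
    note halve = z2_carrier_halve[OF this that]
    then obtain b where b: "\<phi> b = (\<lambda>n. \<phi> c (Suc n) div 2)" using range by (metis imageE)
    have "\<phi> ((1 + 1) * b) = \<phi> c" by (simp only: add mult one b halve(2))
    then have "c = 2 * b" using inj by (simp add: inj_eq)
    then show ?thesis by simp
  qed
  show ?thesis
  proof
    fix a :: 'a
    have "\<phi> a \<in> z2_carrier" using range by blast
    then have "0 \<le> \<phi> a 1 \<and> \<phi> a 1 < 2 ^ 1" unfolding z2_carrier_def by blast
    then have "0 \<le> \<phi> a 1" "\<phi> a 1 < 2" by simp_all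
    then have "\<phi> a 1 = 0 \<or> \<phi> a 1 = 1" by arith
    then show "2 dvd a \<or> 2 dvd a - 1"
    proof
      assume "\<phi> a 1 = 1"
      then have "\<phi> (a + 1) 1 = 0" by (simp add: add one z2_add_def z2_one_def)
      then have "2 dvd a + 1" by (rule two_dvd)
      then have "2 dvd (a + 1) - 2" by (rule dvd_diff) simp
      then show ?thesis by (simp add: algebra_simps)
    qed (simp add: two_dvd)
  qed
qed

definition residue_two_pow :: "'a::idom \<Rightarrow> nat \<Rightarrow> int" where
  "residue_two_pow a n = (THE m. 0 \<le> m \<and> m < 2 ^ n \<and> (2::'a) ^ n dvd a - of_int m)"

lemma two_pow_dvd_diff_of_int_mod:
  assumes "(2::'a::idom) ^ n dvd a - of_int m"
  shows "(2::'a) ^ n dvd a - of_int (m mod 2 ^ n)"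
proof -
  have "(2::'a) ^ n dvd of_int (m - m mod 2 ^ n)"
    by (metis dvd_def minus_mod_eq_mult_div of_int_mult of_int_numeral of_int_power)
  then have "(2::'a) ^ n dvd (a - of_int m) + of_int (m - m mod 2 ^ n)"
    using assms by (rule dvd_add[rotated])
  then show ?thesis by simp
qed

lemma two_pow_dvd_diff_of_int_exists:
  assumes F2: "\<forall>a::'a::idom. 2 dvd a \<or> 2 dvd a - 1"
  shows "\<exists>m. (2::'a) ^ n dvd a - of_int m"
proof (induction n)
  case (Suc n)
  then obtain m c where c: "a - of_int m = 2 ^ n * c" by blast
  from F2 consider "2 dvd c" | "2 dvd c - 1" by blast
  then show ?case
  proof cases
    case 1
    then have "(2::'a) ^ Suc n dvd a - of_int m" by (simp add: c)
    then show ?thesis by blast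
  next
    case 2
    have "a - of_int (m + 2 ^ n) = 2 ^ n * (c - 1)" using c by (simp add: algebra_simps)
    with 2 have "(2::'a) ^ Suc n dvd a - of_int (m + 2 ^ n)" by simp
    then show ?thesis by blast
  qed
qed simp

context
  assumes two: "prime_elem (2::'a::idom)"
begin

lemma two_pow_dvd_of_int_iff:
  "(2::'a) ^ n dvd of_int d \<longleftrightarrow> (2::int) ^ n dvd d"
proof
  show "(2::'a) ^ n dvd of_int d" if "(2::int) ^ n dvd d"
    using that by (metis dvd_def of_int_mult of_int_numeral of_int_power)
  show "(2::int) ^ n dvd d" if "(2::'a) ^ n dvd of_int d"
    using that
  proof (induction n arbitrary: d)
    case (Suc n)
    have "(2::'a) dvd of_int d" using Suc.prems by (simp add: dvd_mult_left)
    have "even d"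
    proof (rule ccontr)
      assume "odd d"
      then obtain k where "d = 2 * k + 1" by (rule oddE)
      then have "(2::'a) dvd 2 * of_int k + 1" using \<open>(2::'a) dvd of_int d\<close> by simp
      then have "(2::'a) dvd 1" by (simp add: dvd_add_right_iff)
      with two show False by (simp add: prime_elem_not_unit)
    qed
    then obtain k where k: "d = 2 * k" by blast
    have "(2::'a) ^ n dvd of_int k" using Suc.prems two by (simp add: k prime_elem_def)
    then show ?case using Suc.IH k by simp
  qed simp
qed

lemma residue_two_pow_eqI:
  assumes dvd: "(2::'a) ^ n dvd a - of_int m"
  shows "residue_two_pow a n = m mod 2 ^ n"
  unfolding residue_two_pow_def
proof (rule the_equality)
  show "0 \<le> m mod 2 ^ n \<and> m mod 2 ^ n < 2 ^ n \<and> (2::'a) ^ n dvd a - of_int (m mod 2 ^ n)"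
    using two_pow_dvd_diff_of_int_mod[OF dvd] by simp
  fix m' assume m': "0 \<le> m' \<and> m' < 2 ^ n \<and> (2::'a) ^ n dvd a - of_int m'"
  have "(2::'a) ^ n dvd (a - of_int (m mod 2 ^ n)) - (a - of_int m')"
    using two_pow_dvd_diff_of_int_mod[OF dvd] m' by (blast intro: dvd_diff)
  then have "(2::'a) ^ n dvd of_int (m' - m mod 2 ^ n)" by simp
  then have "(2::int) ^ n dvd m' - m mod 2 ^ n" using two_pow_dvd_of_int_iff by blast
  then have "m' mod 2 ^ n = m mod 2 ^ n" by (metis mod_eq_dvd_iff mod_mod_trivial)
  then show "m' = m mod 2 ^ n" using m' by simp
qed

lemma residue_two_pow_dvd:
  assumes F2: "\<forall>a::'a. 2 dvd a \<or> 2 dvd a - 1"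
  shows "(2::'a) ^ n dvd a - of_int (residue_two_pow a n)"
proof -
  obtain m where "(2::'a) ^ n dvd a - of_int m" using two_pow_dvd_diff_of_int_exists[OF F2] by blast
  then show ?thesis by (simp add: residue_two_pow_eqI two_pow_dvd_diff_of_int_mod)
qed

lemma residue_two_pow_in_z2_carrier:
  assumes F2: "\<forall>a::'a. 2 dvd a \<or> 2 dvd a - 1"
  shows "residue_two_pow (a::'a) \<in> z2_carrier"
proof -
  note dvd = residue_two_pow_dvd[OF F2]
  have "residue_two_pow a (Suc n) mod 2 ^ n = residue_two_pow a n" for n
  proof -
    have "(2::'a) ^ n dvd a - of_int (residue_two_pow a (Suc n))"
      using dvd[of "Suc n" a] by (simp add: dvd_mult_right)
    then show ?thesis by (simp add: residue_two_pow_eqI)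
  qed
  moreover have "0 \<le> residue_two_pow a n \<and> residue_two_pow a n < 2 ^ n" for n
    using residue_two_pow_eqI[OF dvd[of n a]]
    by (metis pos_mod_bound pos_mod_sign zero_less_numeral zero_less_power)
  ultimately show ?thesis by (simp add: z2_carrier_def)
qed

lemma residue_two_pow_add:
  assumes F2: "\<forall>a::'a. 2 dvd a \<or> 2 dvd a - 1"
  shows "residue_two_pow (a + b :: 'a) = z2_add (residue_two_pow a) (residue_two_pow b)"
proof
  fix n
  have "(2::'a) ^ n dvd (a - of_int (residue_two_pow a n)) + (b - of_int (residue_two_pow b n))"
    by (intro dvd_add residue_two_pow_dvd[OF F2])
  then have "(2::'a) ^ n dvd a + b - of_int (residue_two_pow a n + residue_two_pow b n)"
    by (simp add: algebra_simps)
  then show "residue_two_pow (a + b) n = z2_add (residue_two_pow a) (residue_two_pow b) n"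
    by (simp add: residue_two_pow_eqI z2_add_def)
qed

lemma residue_two_pow_mult:
  assumes F2: "\<forall>a::'a. 2 dvd a \<or> 2 dvd a - 1"
  shows "residue_two_pow (a * b :: 'a) = z2_mult (residue_two_pow a) (residue_two_pow b)"
proof
  fix n
  let ?ra = "residue_two_pow a n" and ?rb = "residue_two_pow b n"
  have "(2::'a) ^ n dvd (a - of_int ?ra) * b + of_int ?ra * (b - of_int ?rb)"
    by (intro dvd_add dvd_mult dvd_mult2 residue_two_pow_dvd[OF F2])
  then have "(2::'a) ^ n dvd a * b - of_int (?ra * ?rb)" by (simp add: algebra_simps)
  then show "residue_two_pow (a * b) n = z2_mult (residue_two_pow a) (residue_two_pow b) n"
    by (simp add: residue_two_pow_eqI z2_mult_def)
qed

lemma residue_two_pow_one: "residue_two_pow (1::'a) = z2_one"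
  by (rule ext) (simp add: residue_two_pow_eqI[of _ 1 1] z2_one_def)

lemma inj_residue_two_pow:
  assumes F2: "\<forall>a::'a. 2 dvd a \<or> 2 dvd a - 1"
    and separated: "\<And>x::'a. \<forall>n. 2 ^ n dvd x \<Longrightarrow> x = 0"
  shows "inj (residue_two_pow :: 'a \<Rightarrow> nat \<Rightarrow> int)"
proof (rule injI)
  fix a b :: 'a assume r_eq: "residue_two_pow a = residue_two_pow b"
  have "(2::'a) ^ n dvd (a - of_int (residue_two_pow a n)) - (b - of_int (residue_two_pow b n))"
    for n by (intro dvd_diff residue_two_pow_dvd[OF F2])
  then have "\<forall>n. (2::'a) ^ n dvd a - b" by (simp add: r_eq)
  then show "a = b" using separated[of "a - b"] by simp
qed

text \<open>A point of Z_2 is a 2-adic Cauchy sequence of integers; its limit in R has these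
  integers as residues.\<close>

lemma z2_carrier_subset_range_residue_two_pow:
  assumes complete: "adically_complete (2::'a)"
  shows "z2_carrier \<subseteq> range (residue_two_pow :: 'a \<Rightarrow> nat \<Rightarrow> int)"
proof
  fix f assume f: "f \<in> z2_carrier"
  define s where "s n = (of_int (f n) :: 'a)" for n
  have s_cauchy: "(2::'a) ^ k dvd s m - s n" if "k \<le> m" "k \<le> n" for k m n
  proof -
    have "f m mod 2 ^ k = f n mod 2 ^ k" using z2_carrier_mod[OF f] that by simp
    then have "(2::int) ^ k dvd f m - f n" by (simp add: mod_eq_dvd_iff)
    then show ?thesis by (simp add: s_def two_pow_dvd_of_int_iff[symmetric])
  qed
  then obtain l where l: "\<forall>k. \<exists>N. \<forall>n\<ge>N. 2 ^ k dvd s n - l"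
    using complete unfolding adically_complete_def by blast
  have "residue_two_pow l n = f n" for n
  proof -
    obtain N where N: "\<forall>n'\<ge>N. 2 ^ n dvd s n' - l" using l by blast
    have "(2::'a) ^ n dvd s (max N n) - s n" by (rule s_cauchy) simp_all
    moreover have "(2::'a) ^ n dvd s (max N n) - l" using N by simp
    ultimately have "(2::'a) ^ n dvd (s (max N n) - s n) - (s (max N n) - l)"
      by (rule dvd_diff)
    then have "(2::'a) ^ n dvd l - of_int (f n)" by (simp add: s_def)
    then show ?thesis using f by (simp add: residue_two_pow_eqI[of n l] z2_carrier_def)
  qed
  then show "f \<in> range (residue_two_pow :: 'a \<Rightarrow> nat \<Rightarrow> int)" by (metis ext rangeI)
qed

lemma iso_to_Z2_iff_residues_01:
  assumes separated: "\<And>x::'a. \<forall>n. 2 ^ n dvd x \<Longrightarrow> x = 0"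
    and complete: "adically_complete (2::'a)"
  shows "iso_to_Z2 TYPE('a) \<longleftrightarrow> (\<forall>a::'a. 2 dvd a \<or> 2 dvd a - 1)"
proof
  assume F2: "\<forall>a::'a. 2 dvd a \<or> 2 dvd a - 1"
  have "bij_betw (residue_two_pow :: 'a \<Rightarrow> nat \<Rightarrow> int) UNIV z2_carrier"
    using inj_residue_two_pow[OF F2 separated] z2_carrier_subset_range_residue_two_pow[OF complete]
      residue_two_pow_in_z2_carrier[OF F2]
    by (auto simp: bij_betw_def)
  then show "iso_to_Z2 TYPE('a)"
    unfolding iso_to_Z2_def
    using residue_two_pow_add[OF F2] residue_two_pow_mult[OF F2] residue_two_pow_one by blast
qed (rule iso_to_Z2_imp_residues_01)

end

lemma nonarch_local_integer_ring_prime_two: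
  fixes x u :: "'a::idom"
  assumes R: "nonarch_local_integer_ring TYPE('a)" and two: "prime_elem (2::'a)"
  shows "\<not> x dvd 1 \<Longrightarrow> 2 dvd x"
    and "\<exists>c. 2 dvd u - c * c"
    and "iso_to_Z2 TYPE('a) \<longleftrightarrow> (\<forall>a::'a. 2 dvd a \<or> 2 dvd a - 1)"
proof -
  obtain p :: 'a where p: "dvr_uniformizer p" "finite_residue_field p" "adically_complete p"
    using R unfolding nonarch_local_integer_ring_def by blast
  have p_dvd_two: "p dvd 2" and two_dvd_p: "2 dvd p"
    using dvr_uniformizer_associated_prime[OF p(1) two] by blast+
  show "2 dvd x" if "\<not> x dvd 1"
    using dvr_uniformizer_dvd_nonunit[OF p(1) that] two_dvd_p by (rule dvd_trans[rotated])
  show "\<exists>c. 2 dvd u - c * c"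
    using finite_residue_field_dvd[OF p(2) two_dvd_p] two by (rule square_mod_prime_dvd_two) simp
  have separated: "y = 0" if "\<forall>n. (2::'a) ^ n dvd y" for y :: 'a
  proof (rule dvr_uniformizer_pow_dvd_imp_zero[OF p(1)], rule allI)
    fix n
    show "p ^ n dvd y" using dvd_power_same[OF p_dvd_two, of n] that by (blast intro: dvd_trans)
  qed
  have "adically_complete (2::'a)"
    using p(3) p_dvd_two two_dvd_p by (rule adically_complete_associated)
  with two separated show "iso_to_Z2 TYPE('a) \<longleftrightarrow> (\<forall>a::'a. 2 dvd a \<or> 2 dvd a - 1)"
    by (rule iso_to_Z2_iff_residues_01)
qed

lemma Qform_pair [simp]: "Qform (x, y) = x * x - y * y"
  by (simp add: Qform_def)

lemma unimodular_if_primitive: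
  assumes "primitive (x, y)" and "(x, y) \<noteq> (0, 0)"
  shows "\<exists>a b. a * x + b * y = (1::'a::idom)"
proof -
  obtain W where W: "is_submodule W"
    and span: "\<forall>z. \<exists>r. \<exists>w\<in>W. z = add_pair (smul_pair r (x, y)) w"
    and disjoint: "\<forall>r. smul_pair r (x, y) \<in> W \<longrightarrow> smul_pair r (x, y) = (0, 0)"
    using assms(1) unfolding primitive_def by blast
  obtain a w1 where w1: "w1 \<in> W" "(1, 0) = add_pair (smul_pair a (x, y)) w1" using span by blast
  obtain b w2 where w2: "w2 \<in> W" "(0, 1) = add_pair (smul_pair b (x, y)) w2" using span by blast
  \<comment> \<open>x w1 + y w2 = (1 - a x - b y) (x, y) lies in W, so 1 - a x - b y kills (x, y).\<close>
  have "add_pair (smul_pair x w1) (smul_pair y w2) \<in> W"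
    using W w1(1) w2(1) unfolding is_submodule_def by blast
  moreover have "add_pair (smul_pair x w1) (smul_pair y w2) = smul_pair (1 - a * x - b * y) (x, y)"
  proof -
    obtain a1 b1 a2 b2 where w: "w1 = (a1, b1)" "w2 = (a2, b2)" by fastforce
    with w1(2) w2(2) have "1 = a * x + a1" "0 = a * y + b1" "0 = b * x + a2" "1 = b * y + b2"
      by (simp_all add: add_pair_def smul_pair_def)
    then have "x * a1 + y * a2 = (1 - a * x - b * y) * x"
      and "x * b1 + y * b2 = (1 - a * x - b * y) * y" by algebra+
    then show ?thesis by (simp add: w add_pair_def smul_pair_def)
  qed
  ultimately have "smul_pair (1 - a * x - b * y) (x, y) = (0, 0)" using disjoint by simp
  then have "(1 - a * x - b * y) * x = 0" "(1 - a * x - b * y) * y = 0"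
    by (simp_all add: smul_pair_def)
  with assms(2) have "1 - a * x - b * y = 0" by auto
  then show ?thesis by (metis diff_diff_eq eq_iff_diff_eq_0)
qed

lemma primitive_zero: "primitive (0::'a::comm_ring_1, 0)"
  unfolding primitive_def is_submodule_def by (auto simp: smul_pair_def add_pair_def)

lemma primitive_if_unimodular:
  assumes ab: "a * x + b * y = (1::'a::idom)"
  shows "primitive (x, y)"
proof -
  define W where "W = {(s, t). a * s + b * t = 0}"
  have "is_submodule W"
    by (auto simp: is_submodule_def W_def add_pair_def smul_pair_def algebra_simps)
      (metis distrib_left mult_zero_right)
  moreover have "\<exists>r. \<exists>w\<in>W. z = add_pair (smul_pair r (x, y)) w" for z
  proof (intro exI bexI)
    let ?r = "a * fst z + b * snd z"
    show "z = add_pair (smul_pair ?r (x, y)) (fst z - ?r * x, snd z - ?r * y)"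
      by (simp add: add_pair_def smul_pair_def)
    have "a * (fst z - ?r * x) + b * (snd z - ?r * y) = ?r * (1 - (a * x + b * y))"
      by (simp add: algebra_simps)
    then show "(fst z - ?r * x, snd z - ?r * y) \<in> W" by (simp add: W_def ab)
  qed
  moreover have "smul_pair r (x, y) = (0, 0)" if "smul_pair r (x, y) \<in> W" for r
  proof -
    have "r * (a * x + b * y) = 0" using that by (simp add: W_def smul_pair_def algebra_simps)
    then show ?thesis by (simp add: ab smul_pair_def)
  qed
  ultimately show ?thesis unfolding primitive_def by blast
qed

lemma primitive_iff_unimodular:
  "primitive (x, y) \<longleftrightarrow> (x, y) = (0, 0) \<or> (\<exists>a b. a * x + b * y = (1::'a::idom))"
  using unimodular_if_primitive primitive_if_unimodular primitive_zero by blast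

lemma primitive_if_Qform_unit:
  assumes "Qform (x, y) dvd (1::'a::idom)"
  shows "primitive (x, y)"
proof -
  obtain w where "1 = (x * x - y * y) * w" using assms by auto
  then have "(w * x) * x + (- w * y) * y = 1" by (simp add: algebra_simps)
  then show ?thesis by (rule primitive_if_unimodular)
qed

lemma four_mult_mem_Q_values: "4 * r \<in> (Q_values :: 'a::comm_ring_1 set)"
proof -
  have "4 * r = Qform (r + 1, r - 1)" by (simp add: algebra_simps)
  then show ?thesis unfolding Q_values_def by blast
qed

lemma Qform_eq_four_mult: "x - y = 2 * a \<Longrightarrow> Qform (x, y) = 4 * (a * (a + y))"
  by (simp add: algebra_simps)

context
  assumes two: "prime_elem (2::'a::idom)"
    and nonunit_two_dvd: "\<And>x::'a. \<not> x dvd 1 \<Longrightarrow> 2 dvd x"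
begin

lemma unit_iff_not_two_dvd: "x dvd 1 \<longleftrightarrow> \<not> 2 dvd (x::'a)"
  using nonunit_two_dvd two by (meson dvd_trans prime_elem_not_unit)

lemma two_dvd_mult_iff: "2 dvd x * y \<longleftrightarrow> 2 dvd x \<or> 2 dvd (y::'a)"
  using two by (rule prime_elem_dvd_mult_iff)

lemma Qform_unit_if_not_two_dvd_diff:
  assumes "\<not> 2 dvd x - (y::'a)"
  shows "Qform (x, y) dvd 1"
proof -
  have "x + y = (x - y) + 2 * y" by simp
  then have "\<not> 2 dvd x + y" using assms by (metis dvd_add_left_iff dvd_triv_left)
  moreover have "Qform (x, y) = (x - y) * (x + y)" by (simp add: algebra_simps)
  ultimately show ?thesis using assms by (simp add: unit_iff_not_two_dvd two_dvd_mult_iff)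
qed

lemma Q_values_subset: "(Q_values :: 'a set) \<subseteq> {u. u dvd 1} \<union> {4 * r | r. True}"
proof
  fix z :: 'a assume "z \<in> Q_values"
  then obtain x y where z: "z = Qform (x, y)" unfolding Q_values_def by auto
  show "z \<in> {u. u dvd 1} \<union> {4 * r | r. True}"
  proof (cases "2 dvd x - y")
    case True
    then obtain a where "x - y = 2 * a" by blast
    then show ?thesis using z Qform_eq_four_mult by blast
  qed (use z Qform_unit_if_not_two_dvd_diff in blast)
qed

lemma primitive_iff_not_two_dvd_both:
  "primitive (x, y) \<longleftrightarrow> (x, y) = (0, 0) \<or> \<not> (2 dvd x \<and> 2 dvd (y::'a))"
proof -
  have "(\<exists>a b. a * x + b * y = 1) \<longleftrightarrow> \<not> (2 dvd x \<and> 2 dvd y)"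
  proof
    assume "\<exists>a b. a * x + b * y = 1"
    then show "\<not> (2 dvd x \<and> 2 dvd y)" using two by (metis dvd_add dvd_mult prime_elem_not_unit)
  next
    assume "\<not> (2 dvd x \<and> 2 dvd y)"
    then have "x dvd 1 \<or> y dvd 1" by (simp add: unit_iff_not_two_dvd)
    then show "\<exists>a b. a * x + b * y = 1"
      by (metis add.right_neutral add_0 dvd_def mult.commute mult_zero_left)
  qed
  then show ?thesis by (simp add: primitive_iff_unimodular)
qed

lemma Qform_mem_Q_prim_values_if_not_two_dvd:
  "\<not> 2 dvd x \<Longrightarrow> Qform (x, y) \<in> (Q_prim_values :: 'a set)"
  unfolding Q_prim_values_def by (auto simp: primitive_iff_not_two_dvd_both)

context
  assumes squares: "\<And>u::'a. \<exists>c. 2 dvd u - c * c"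
begin

lemma unit_mem_Q_values:
  assumes u: "u dvd (1::'a)"
  obtains x y where "Qform (x, y) = u"
proof -
  obtain c t where t: "u - c * c = 2 * t" using squares by blast
  have "\<not> 2 dvd c"
  proof
    assume "2 dvd c"
    then have "2 dvd (u - c * c) + c * c" using t by simp
    with u show False by (simp add: unit_iff_not_two_dvd)
  qed
  then obtain c' where c': "1 = c * c'" by (auto simp: unit_iff_not_two_dvd[symmetric])
  \<comment> \<open>u = c^2 + 2t with c a unit, and (c + s)^2 - s^2 = c^2 + 2 c s; take s = t/c.\<close>
  have "Qform (c + t * c', t * c') = c * c + 2 * t * (c * c')" by (simp add: algebra_simps)
  also have "\<dots> = u" using t c' by (simp add: algebra_simps)
  finally show ?thesis by (rule that)
qed

lemma Q_values_eq: "(Q_values :: 'a set) = {u. u dvd 1} \<union> {4 * r | r. True}"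
proof (rule subset_antisym[OF Q_values_subset])
  show "{u. u dvd 1} \<union> {4 * r | r. True} \<subseteq> (Q_values :: 'a set)"
    using unit_mem_Q_values four_mult_mem_Q_values unfolding Q_values_def by blast
qed

lemma unit_mem_Q_prim_values: "u dvd (1::'a) \<Longrightarrow> u \<in> Q_prim_values"
  unfolding Q_prim_values_def
  by (metis (mono_tags, lifting) mem_Collect_eq primitive_if_Qform_unit unit_mem_Q_values)

lemma Q_prim_values_eq_if_residues_01:
  assumes F2: "\<forall>a::'a. 2 dvd a \<or> 2 dvd a - 1"
  shows "(Q_prim_values :: 'a set) = {u. u dvd 1} \<union> {8 * r | r. True}"
proof (intro subset_antisym subsetI)
  fix z :: 'a assume "z \<in> Q_prim_values"
  then obtain x y where z: "z = Qform (x, y)" and prim: "primitive (x, y)"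
    unfolding Q_prim_values_def by auto
  show "z \<in> {u. u dvd 1} \<union> {8 * r | r. True}"
  proof (cases "2 dvd x - y")
    case True
    then obtain a where a: "x - y = 2 * a" by blast
    have "2 dvd a \<or> 2 dvd a + y"
    proof (rule ccontr)
      assume odd: "\<not> (2 dvd a \<or> 2 dvd a + y)"
      then have "2 dvd (a + y - 1) - (a - 1)" using F2 by (meson dvd_diff)
      then have "2 dvd y" by simp
      moreover from this have "2 dvd x" using a by (metis diff_add_cancel dvd_add dvd_triv_left)
      ultimately have "x = 0 \<and> y = 0" using prim by (simp add: primitive_iff_not_two_dvd_both)
      then show False using odd a prime_elem_not_zeroI[OF two] by simp
    qed
    then consider b where "a = 2 * b" | b where "a + y = 2 * b" by blast
    then have "\<exists>r. z = 8 * r"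
    proof cases
      case (1 b)
      then have "z = 8 * (b * (a + y))" using z Qform_eq_four_mult[OF a] by simp
      then show ?thesis by blast
    next
      case (2 b)
      then have "z = 8 * (a * b)" using z Qform_eq_four_mult[OF a] by simp
      then show ?thesis by blast
    qed
    then show ?thesis by blast
  qed (use z Qform_unit_if_not_two_dvd_diff in blast)
next
  fix z :: 'a assume "z \<in> {u. u dvd 1} \<union> {8 * r | r. True}"
  then consider "z dvd 1" | r where "z = 8 * r" by blast
  then show "z \<in> Q_prim_values"
  proof cases
    case 2
    then have "z = Qform (1 + 2 * r, 2 * r - 1)" by (simp add: algebra_simps)
    moreover have "\<not> 2 dvd 1 + 2 * r"
      using two by (metis dvd_add_left_iff dvd_triv_left prime_elem_not_unit)
    ultimately show ?thesis using Qform_mem_Q_prim_values_if_not_two_dvd by simp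
  qed (rule unit_mem_Q_prim_values)
qed

lemma Q_prim_values_eq_if_not_residues_01:
  assumes c: "\<not> 2 dvd c" "\<not> 2 dvd c - (1::'a)"
  shows "(Q_prim_values :: 'a set) = {u. u dvd 1} \<union> {4 * r | r. True}"
proof (intro subset_antisym subsetI)
  fix z :: 'a assume "z \<in> Q_prim_values"
  then have "z \<in> Q_values" unfolding Q_prim_values_def Q_values_def by blast
  then show "z \<in> {u. u dvd 1} \<union> {4 * r | r. True}" using Q_values_subset by blast
next
  fix z :: 'a assume "z \<in> {u. u dvd 1} \<union> {4 * r | r. True}"
  then consider "z dvd 1" | r where "z = 4 * r" by blast
  then show "z \<in> Q_prim_values"
  proof cases
    case 2
    show ?thesis
    proof (cases "2 dvd r + 1")
      case False
      have "z = Qform (r + 1, r - 1)" using 2 by (simp add: algebra_simps)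
      then show ?thesis using False Qform_mem_Q_prim_values_if_not_two_dvd by simp
    next
      case True
      \<comment> \<open>Now r is congruent to -1, and the residue of c, being neither 0 nor 1,
        is not a root of X^2 - 1.\<close>
      obtain c' where c': "1 = c * c'" using c(1) by (auto simp: unit_iff_not_two_dvd[symmetric])
      have "z = Qform (c + r * c', r * c' - c)" using 2 c' by (simp add: algebra_simps)
      moreover have "\<not> 2 dvd c + r * c'"
      proof
        assume "2 dvd c + r * c'"
        then have "2 dvd c * (c + r * c') - (r + 1)" using True by simp
        moreover have "c * (c + r * c') - (r + 1) = (c - 1) * ((c - 1) + 2)"
          using c' by (simp add: algebra_simps)
        ultimately have "2 dvd (c - 1) * ((c - 1) + 2)" by simp
        then have "2 dvd c - 1 \<or> 2 dvd (c - 1) + 2" by (simp only: two_dvd_mult_iff)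
        then show False using c(2) by (metis dvd_add_left_iff dvd_refl)
      qed
      ultimately show ?thesis using Qform_mem_Q_prim_values_if_not_two_dvd by simp
    qed
  qed (rule unit_mem_Q_prim_values)
qed

end

end

theorem lemma5p1:
  assumes "nonarch_local_integer_ring TYPE('a::idom)"
    and "CHAR('a) \<noteq> 2"
    and "prime_elem (2::'a)"
  shows "(Q_values :: 'a set) = {u. u dvd 1} \<union> {4 * r | r. True} \<and>
         (Q_prim_values :: 'a set) =
           (if iso_to_Z2 TYPE('a) then {u. u dvd 1} \<union> {8 * r | r. True}
            else {u. u dvd 1} \<union> {4 * r | r. True})"
proof -
  note two = assms(3)
  note R = nonarch_local_integer_ring_prime_two[OF assms(1) two]
  note Q_values = Q_values_eq[OF two R(1) R(2)]
  show ?thesis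
  proof (cases "\<forall>a::'a. 2 dvd a \<or> 2 dvd a - 1")
    case True
    then show ?thesis
      using Q_values Q_prim_values_eq_if_residues_01[OF two R(1) R(2)] R(3) by simp
  next
    case False
    then obtain c :: 'a where "\<not> 2 dvd c" "\<not> 2 dvd c - 1" by blast
    then show ?thesis
      using Q_values Q_prim_values_eq_if_not_residues_01[OF two R(1) R(2)] R(3) False by simp
  qed
qed

end
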